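(* Let $S$ be a sample (a finite sequence of examples $z=(x,y)\in\mathcal X\times\{\pm1\}$), let $k>0$, and let $T\ge 2k\log|S|$. Let $p_1$ be the uniform distribution over the entries of $S$, and for $t=1,\dots,T$ let $h_t:\mathcal X\to\{\pm1\}$ be arbitrary hypotheses satisfying $\sum_{z=(x,y)\in S}p_t(z)1[h_t(x)\ne y]\le\frac{1}{5k}$ (i.e. $h_t$ is $\alpha$-weak for $p_t$ with $\alpha=\frac12-\frac1{5k}$), where $p_{t+1}(z)\propto p_t(z)\,2^{-1[h_t(x)=y]}$ for all $z\in S$ (Adaboost with parameter $\eta=\ln 2$). Then for every $z=(x,y)\in S$, $\frac1T\sum_{t=1}^T1[h_t(x)\ne y]\le\frac1k$.
   Context: $\log$ denotes the base-2 logarithm. The normalization in $p_{t+1}$ is over the entries of $S$ so that $p_{t+1}$ is a probability distribution. *)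

theory Defs
  imports Complex_Main
begin

text \<open>Distributions over the entries of S are functions on the indices i < length S.
  ada_weight S h t i is the unnormalised Adaboost (eta = ln 2) update factor
  2 powr (- 1[h_t(x_i) = y_i]).\<close>

definition ada_factor :: "('a \<times> int) list \<Rightarrow> (nat \<Rightarrow> 'a \<Rightarrow> int) \<Rightarrow> nat \<Rightarrow> nat \<Rightarrow> real" where
  "ada_factor S h t i = (2::real) powr (- of_bool (h t (fst (S ! i)) = snd (S ! i)))"

text \<open>The value at t = 0 is irrelevant (set to uniform).\<close>

primrec ada_p :: "('a \<times> int) list \<Rightarrow> (nat \<Rightarrow> 'a \<Rightarrow> int) \<Rightarrow> nat \<Rightarrow> nat \<Rightarrow> real" where
  "ada_p S h 0 i = 1 / real (length S)"
| "ada_p S h (Suc t) i =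
     (if t = 0 then 1 / real (length S)
      else ada_p S h t i * ada_factor S h t i /
           (\<Sum>j<length S. ada_p S h t j * ada_factor S h t j))"

end

theory Submission
  imports Defs
begin

text \<open>The unnormalised weight of an example after rounds 1, ..., t - 1 is a product of
  Adaboost factors, and p_t is this weight divided by the total weight Z_t. In each round
  Z_(t+1) = Z_t (1 + err_t) / 2 \<le> Z_t (1 + a) / 2, where err_t \<le> a is the weighted error
  of h_t, whereas the weight of a fixed example that h errs on M times out of T rounds is
  2^(M - T). Since this weight is at most Z_(T+1) \<le> |S| ((1 + a)/2)^T, we get
  M \<le> log |S| + T log (1 + a), which for a = 1/(5k) and T \<ge> 2k log |S| is at most T/k.\<close>

definition ada_mistake :: "('a \<times> int) list \<Rightarrow> (nat \<Rightarrow> 'a \<Rightarrow> int) \<Rightarrow> nat \<Rightarrow> nat \<Rightarrow> real" where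
  "ada_mistake S h t i = of_bool (h t (fst (S ! i)) \<noteq> snd (S ! i))"

definition ada_weight :: "('a \<times> int) list \<Rightarrow> (nat \<Rightarrow> 'a \<Rightarrow> int) \<Rightarrow> nat \<Rightarrow> nat \<Rightarrow> real" where
  "ada_weight S h t i = (\<Prod>s\<in>{1..<t}. ada_factor S h s i)"

definition ada_total :: "('a \<times> int) list \<Rightarrow> (nat \<Rightarrow> 'a \<Rightarrow> int) \<Rightarrow> nat \<Rightarrow> real" where
  "ada_total S h t = (\<Sum>j<length S. ada_weight S h t j)"

lemma ada_factor_eq_mistake: "ada_factor S h t i = (1 + ada_mistake S h t i) / 2"
  by (simp add: ada_factor_def ada_mistake_def)

lemma ada_factor_pos: "ada_factor S h t i > 0"
  by (simp add: ada_factor_def)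

lemma ada_weight_pos: "ada_weight S h t i > 0"
  unfolding ada_weight_def by (simp add: ada_factor_pos prod_pos)

lemma ada_total_pos: "S \<noteq> [] \<Longrightarrow> ada_total S h t > 0"
  unfolding ada_total_def by (intro sum_pos) (auto simp: ada_weight_pos)

lemma ada_weight_le_total: "i < length S \<Longrightarrow> ada_weight S h t i \<le> ada_total S h t"
  unfolding ada_total_def by (rule member_le_sum) (auto intro: less_imp_le ada_weight_pos)

lemma ada_weight_Suc:
  "t \<ge> 1 \<Longrightarrow> ada_weight S h (Suc t) i = ada_weight S h t i * ada_factor S h t i"
  unfolding ada_weight_def by (simp add: prod.atLeastLessThan_Suc)

lemma ada_total_Suc:
  "t \<ge> 1 \<Longrightarrow> ada_total S h (Suc t) = (\<Sum>j<length S. ada_weight S h t j * ada_factor S h t j)"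
  unfolding ada_total_def by (simp add: ada_weight_Suc)

lemma ada_p_eq_weight:
  assumes "S \<noteq> []" and "t \<ge> 1"
  shows "ada_p S h t i = ada_weight S h t i / ada_total S h t"
  using assms(2)
proof (induction t arbitrary: i)
  case 0
  then show ?case by simp
next
  case (Suc t)
  show ?case
  proof (cases "t = 0")
    case True
    then show ?thesis by (simp add: ada_weight_def ada_total_def)
  next
    case False
    then have t: "t \<ge> 1" by simp
    let ?Z = "ada_total S h"
    have "(\<Sum>j<length S. ada_p S h t j * ada_factor S h t j) = ?Z (Suc t) / ?Z t"
      by (simp add: Suc.IH[OF t] ada_total_Suc[OF t] sum_divide_distrib)
    then have "ada_p S h (Suc t) i
        = ada_weight S h t i / ?Z t * ada_factor S h t i / (?Z (Suc t) / ?Z t)"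
      using False by (simp add: Suc.IH[OF t])
    also have "\<dots> = ada_weight S h (Suc t) i / ?Z (Suc t)"
      using ada_total_pos[OF assms(1), of h t] by (simp add: ada_weight_Suc[OF t])
    finally show ?thesis .
  qed
qed

lemma ada_total_Suc_eq_weighted_error:
  assumes "S \<noteq> []" and "t \<ge> 1"
  shows "ada_total S h (Suc t)
    = ada_total S h t * (1 + (\<Sum>j<length S. ada_p S h t j * ada_mistake S h t j)) / 2"
proof -
  let ?Z = "ada_total S h t"
  have Z: "?Z > 0" using ada_total_pos[OF assms(1)] .
  have p_sum: "(\<Sum>j<length S. ada_p S h t j) = 1"
    using Z by (simp add: ada_p_eq_weight[OF assms] ada_total_def flip: sum_divide_distrib)
  have "ada_total S h (Suc t) = ?Z * (\<Sum>j<length S. ada_p S h t j * ada_factor S h t j)"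
    using Z by (simp add: ada_total_Suc[OF assms(2)] ada_p_eq_weight[OF assms] sum_distrib_left)
  also have "(\<Sum>j<length S. ada_p S h t j * ada_factor S h t j)
      = (1 + (\<Sum>j<length S. ada_p S h t j * ada_mistake S h t j)) / 2"
    using p_sum by (simp add: ada_factor_eq_mistake algebra_simps sum.distrib
                         flip: sum_divide_distrib)
  finally show ?thesis by simp
qed

lemma ada_total_le_geometric:
  assumes "S \<noteq> []" and "a \<ge> 0"
    and weak: "\<And>t. t \<in> {1..T} \<Longrightarrow> (\<Sum>j<length S. ada_p S h t j * ada_mistake S h t j) \<le> a"
  shows "ada_total S h (Suc T) \<le> length S * ((1 + a) / 2) ^ T"
  using weak
proof (induction T)
  case 0
  then show ?case by (simp add: ada_total_def ada_weight_def)
next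
  case (Suc T)
  let ?Z = "ada_total S h"
  have "?Z (Suc (Suc T)) \<le> ?Z (Suc T) * ((1 + a) / 2)"
    using Suc.prems[of "Suc T"] ada_total_pos[OF assms(1), of h "Suc T"]
    by (simp add: ada_total_Suc_eq_weighted_error[OF assms(1)])
  also have "\<dots> \<le> length S * ((1 + a) / 2) ^ T * ((1 + a) / 2)"
    using Suc assms(2) by (intro mult_right_mono) auto
  finally show ?case by (simp add: mult.commute mult.left_commute)
qed

lemma ada_weight_eq_powr_mistakes:
  "ada_weight S h (Suc n) i * 2 ^ n = 2 powr (\<Sum>t=1..n. ada_mistake S h t i)"
proof (induction n)
  case 0
  then show ?case by (simp add: ada_weight_def)
next
  case (Suc n)
  have "2 * ada_factor S h (Suc n) i = 2 powr ada_mistake S h (Suc n) i"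
    by (simp add: ada_factor_eq_mistake ada_mistake_def)
  moreover have "ada_weight S h (Suc (Suc n)) i * 2 ^ Suc n
      = (ada_weight S h (Suc n) i * 2 ^ n) * (2 * ada_factor S h (Suc n) i)"
    by (simp add: ada_weight_Suc)
  ultimately show ?case by (simp add: Suc.IH powr_add)
qed

lemma ada_mistakes_le:
  assumes i: "i < length S" and "a \<ge> 0"
    and weak: "\<And>t. t \<in> {1..T} \<Longrightarrow> (\<Sum>j<length S. ada_p S h t j * ada_mistake S h t j) \<le> a"
  shows "(\<Sum>t=1..T. ada_mistake S h t i) \<le> log 2 (length S) + T * log 2 (1 + a)"
proof -
  have S: "S \<noteq> []" using i by auto
  have "2 powr (\<Sum>t=1..T. ada_mistake S h t i) = ada_weight S h (Suc T) i * 2 ^ T"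
    by (rule ada_weight_eq_powr_mistakes[symmetric])
  also have "\<dots> \<le> ada_total S h (Suc T) * 2 ^ T"
    by (intro mult_right_mono ada_weight_le_total[OF i]) auto
  also have "\<dots> \<le> length S * ((1 + a) / 2) ^ T * 2 ^ T"
    using ada_total_le_geometric[OF S assms(2) weak] by simp
  also have "\<dots> = length S * (1 + a) ^ T"
    by (simp add: power_divide)
  finally have "log 2 (2 powr (\<Sum>t=1..T. ada_mistake S h t i)) \<le> log 2 (length S * (1 + a) ^ T)"
    using S assms(2) by (subst log_le_cancel_iff) auto
  then show ?thesis
    using S assms(2) by (simp add: log_mult log_nat_power)
qed

lemma ln_2_ge_half: "ln (2::real) \<ge> 1/2"
  using ln_le_minus_one[of "1/2 :: real"] by (simp add: ln_div)

lemma log_2_one_plus_le: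
  assumes "a \<ge> 0"
  shows "log 2 (1 + a) \<le> 2 * a"
proof -
  have "ln (1 + a) \<le> a * (2 * ln 2)"
    using ln_add_one_self_le_self[OF assms] mult_left_mono[OF _ assms, of 1 "2 * ln 2"]
      ln_2_ge_half by linarith
  then show ?thesis by (simp add: log_def divide_simps)
qed

theorem lemma2:
  fixes S :: "('a \<times> int) list" and h :: "nat \<Rightarrow> 'a \<Rightarrow> int"
    and k :: real and T :: nat
  assumes labels: "\<forall>z \<in> set S. snd z \<in> {-1, 1}"
    and hyps: "\<forall>t x. h t x \<in> {-1, 1}"
    and kpos: "k > 0"
    and Tbig: "real T \<ge> 2 * k * log 2 (real (length S))"
    and weak: "\<forall>t \<in> {1..T}.
       (\<Sum>i<length S. ada_p S h t i * of_bool (h t (fst (S ! i)) \<noteq> snd (S ! i))) \<le> 1 / (5 * k)"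
  shows "\<forall>i < length S.
     (1 / real T) * (\<Sum>t=1..T. of_bool (h t (fst (S ! i)) \<noteq> snd (S ! i))) \<le> 1 / k"
proof (intro allI impI)
  fix i assume i: "i < length S"
  let ?M = "\<Sum>t=1..T. ada_mistake S h t i"
  have "?M \<le> log 2 (length S) + T * log 2 (1 + 1 / (5 * k))"
    using weak kpos by (intro ada_mistakes_le[OF i]) (auto simp: ada_mistake_def)
  also have "\<dots> \<le> T / (2 * k) + T * (2 / (5 * k))"
    using Tbig kpos log_2_one_plus_le[of "1 / (5 * k)"]
    by (intro add_mono mult_left_mono) (auto simp: field_simps)
  also have "\<dots> \<le> T / k"
    using kpos by (simp add: field_simps)
  finally have "?M \<le> T / k" .
  then show "(1 / real T) * (\<Sum>t=1..T. of_bool (h t (fst (S ! i)) \<noteq> snd (S ! i))) \<le> 1 / k"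
    using kpos by (cases "T = 0") (auto simp: ada_mistake_def field_simps)
qed

end
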